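(* Let $M=(W,\bm{\Box},V)$ be a transitive neighborhood model and $\Sigma$ a set of formulas closed under subformulas. Then the transitive filtration $M^{T}_f=(W_f,\bm{\Box}^{T}_f,V_f)$ of $M$ through $\Sigma$ is a filtration of $M$ through $\Sigma$, i.e. $\bm{\Box}^{T}_f\widetilde{|\varphi|}_M=\widetilde{|\Box\varphi|}_M$ for every formula $\Box\varphi\in\Sigma$.
   Context: A neighborhood model is $M=(W,\bm{\Box},V)$ with $W\neq\varnothing$, $\bm{\Box}:\mathcal P(W)\to\mathcal P(W)$, $V:Var\to\mathcal P(W)$; truth sets: $|p|_M=V(p)$, $|\neg\varphi|_M=W\setminus|\varphi|_M$, $|\varphi\wedge\psi|_M=|\varphi|_M\cap|\psi|_M$, $|\Box\varphi|_M=\bm{\Box}|\varphi|_M$. $M$ is transitive if $\bm{\Box}X\subseteq\bm{\Box}\bm{\Box}X$ for all $X\subseteq W$. For $\Sigma$ closed under subformulas, $w\sim v$ iff $w,v$ satisfy the same formulas of $\Sigma$; $\widetilde w$ is the class of $w$, $W_f=\{\widetilde w:w\in W\}$, $\widetilde X=\{\widetilde w:w\in X\}$, $V_f(p)=\widetilde{|p|}_M$. A filtration of $M$ through $\Sigma$ is a model $(W_f,\bm{\Box}_f,V_f)$ with $\bm{\Box}_f\widetilde{|\varphi|}_M=\widetilde{|\Box\varphi|}_M$ whenever $\Box\varphi\in\Sigma$. The minimal filtration has $\bm{\Box}^{-}_fX=\widetilde{|\Box\varphi|}_M$ if $X=\widetilde{|\varphi|}_M$ for some formula $\Box\varphi\in\Sigma$,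 and $\bm{\Box}^{-}_fX=\varnothing$ otherwise. For any function $\bm{\Box}':\mathcal P(U)\to\mathcal P(U)$, its closure $\widehat{\bm{\Box}'}$ is given by $\widehat{\bm{\Box}'}X=X$ if $X=\bm{\Box}'Y$ for some $Y\subseteq U$, and $\varnothing$ otherwise. The transitive filtration is $M^{T}_f=(W_f,\bm{\Box}^{T}_f,V_f)$ with $\bm{\Box}^{T}_fX=\bm{\Box}^{-}_fX\cup\widehat{\bm{\Box}^{-}_f}X$. *)

theory Defs
  imports Main
begin

datatype 'v fm = Var 'v | Neg "'v fm" | Conj "'v fm" "'v fm" | Box "'v fm"

fun subformulas :: "'v fm \<Rightarrow> 'v fm set" where
  "subformulas (Var p) = {Var p}"
| "subformulas (Neg a) = insert (Neg a) (subformulas a)"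
| "subformulas (Conj a b) = insert (Conj a b) (subformulas a \<union> subformulas b)"
| "subformulas (Box a) = insert (Box a) (subformulas a)"

definition closed_subf :: "'v fm set \<Rightarrow> bool" where
  "closed_subf \<Sigma> \<longleftrightarrow> (\<forall>\<phi>\<in>\<Sigma>. subformulas \<phi> \<subseteq> \<Sigma>)"

definition nbhd_model :: "'w set \<Rightarrow> ('w set \<Rightarrow> 'w set) \<Rightarrow> ('v \<Rightarrow> 'w set) \<Rightarrow> bool" where
  "nbhd_model W N V \<longleftrightarrow> W \<noteq> {} \<and> (\<forall>X. X \<subseteq> W \<longrightarrow> N X \<subseteq> W) \<and> (\<forall>p. V p \<subseteq> W)"

definition transitive_model :: "'w set \<Rightarrow> ('w set \<Rightarrow> 'w set) \<Rightarrow> ('v \<Rightarrow> 'w set) \<Rightarrow> bool" where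
  "transitive_model W N V \<longleftrightarrow> (\<forall>X. X \<subseteq> W \<longrightarrow> N X \<subseteq> N (N X))"

fun truth :: "'w set \<Rightarrow> ('w set \<Rightarrow> 'w set) \<Rightarrow> ('v \<Rightarrow> 'w set) \<Rightarrow> 'v fm \<Rightarrow> 'w set" where
  "truth W N V (Var p) = V p"
| "truth W N V (Neg a) = W - truth W N V a"
| "truth W N V (Conj a b) = truth W N V a \<inter> truth W N V b"
| "truth W N V (Box a) = N (truth W N V a)"

definition cls :: "'w set \<Rightarrow> ('w set \<Rightarrow> 'w set) \<Rightarrow> ('v \<Rightarrow> 'w set) \<Rightarrow> 'v fm set \<Rightarrow> 'w \<Rightarrow> 'w set" where
  "cls W N V \<Sigma> w = {v\<in>W. \<forall>\<phi>\<in>\<Sigma>. (w \<in> truth W N V \<phi> \<longleftrightarrow> v \<in> truth W N V \<phi>)}"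

definition tl_set :: "'w set \<Rightarrow> ('w set \<Rightarrow> 'w set) \<Rightarrow> ('v \<Rightarrow> 'w set) \<Rightarrow> 'v fm set \<Rightarrow> 'w set \<Rightarrow> 'w set set" where
  "tl_set W N V \<Sigma> X = cls W N V \<Sigma> ` X"

definition box_min :: "'w set \<Rightarrow> ('w set \<Rightarrow> 'w set) \<Rightarrow> ('v \<Rightarrow> 'w set) \<Rightarrow> 'v fm set \<Rightarrow> 'w set set \<Rightarrow> 'w set set" where
  "box_min W N V \<Sigma> X =
     (if \<exists>\<phi>. Box \<phi> \<in> \<Sigma> \<and> X = tl_set W N V \<Sigma> (truth W N V \<phi>)
      then tl_set W N V \<Sigma> (truth W N V (Box (SOME \<phi>. Box \<phi> \<in> \<Sigma> \<and> X = tl_set W N V \<Sigma> (truth W N V \<phi>))))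
      else {})"

definition closure_op :: "'a set \<Rightarrow> ('a set \<Rightarrow> 'a set) \<Rightarrow> 'a set \<Rightarrow> 'a set" where
  "closure_op U B X = (if \<exists>Y. Y \<subseteq> U \<and> X = B Y then X else {})"

definition box_T :: "'w set \<Rightarrow> ('w set \<Rightarrow> 'w set) \<Rightarrow> ('v \<Rightarrow> 'w set) \<Rightarrow> 'v fm set \<Rightarrow> 'w set set \<Rightarrow> 'w set set" where
  "box_T W N V \<Sigma> X = box_min W N V \<Sigma> X \<union> closure_op (tl_set W N V \<Sigma> W) (box_min W N V \<Sigma>) X"

end

theory Submission
  imports Defs
begin

text \<open>The minimal filtration is a filtration because the map \<open>X \<mapsto> X~\<close> is injective on
  truth sets of formulas of \<open>\<Sigma>\<close>. The closure part of \<open>\<box>\<^sup>T\<^sub>f\<close> can only add \<open>|\<phi>|~\<close> itself, and only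
  when \<open>|\<phi>|~ = |\<box>\<chi>|~\<close> for some \<open>\<box>\<chi> \<in> \<Sigma>\<close>; then \<open>|\<phi>| = \<box>|\<chi>| \<subseteq> \<box>\<box>|\<chi>| = \<box>|\<phi>|\<close> by
  transitivity, so \<open>|\<phi>|~ \<subseteq> |\<box>\<phi>|~\<close> and nothing new is added.\<close>

lemma truth_subset:
  assumes "nbhd_model W N V"
  shows "truth W N V \<phi> \<subseteq> W"
  using assms by (induction \<phi>) (auto simp: nbhd_model_def)

lemma closed_subf_BoxD:
  assumes "closed_subf \<Sigma>" "Box \<phi> \<in> \<Sigma>"
  shows "\<phi> \<in> \<Sigma>"
  using assms unfolding closed_subf_def by (cases \<phi>) force+

lemma cls_mem_tl_set_truth_iff:
  assumes "nbhd_model W N V" "\<phi> \<in> \<Sigma>" "w \<in> W"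
  shows "cls W N V \<Sigma> w \<in> tl_set W N V \<Sigma> (truth W N V \<phi>) \<longleftrightarrow> w \<in> truth W N V \<phi>"
proof
  assume "cls W N V \<Sigma> w \<in> tl_set W N V \<Sigma> (truth W N V \<phi>)"
  then obtain v where v: "v \<in> truth W N V \<phi>" "cls W N V \<Sigma> w = cls W N V \<Sigma> v"
    by (auto simp: tl_set_def)
  have "w \<in> cls W N V \<Sigma> w"
    using \<open>w \<in> W\<close> by (simp add: cls_def)
  then show "w \<in> truth W N V \<phi>"
    using v \<open>\<phi> \<in> \<Sigma>\<close> by (auto simp: cls_def)
qed (simp add: tl_set_def)

lemma tl_set_truth_subset_iff:
  assumes "nbhd_model W N V" "\<phi> \<in> \<Sigma>" "\<psi> \<in> \<Sigma>"
  shows "tl_set W N V \<Sigma> (truth W N V \<phi>) \<subseteq> tl_set W N V \<Sigma> (truth W N V \<psi>)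
    \<longleftrightarrow> truth W N V \<phi> \<subseteq> truth W N V \<psi>"
proof
  assume sub: "tl_set W N V \<Sigma> (truth W N V \<phi>) \<subseteq> tl_set W N V \<Sigma> (truth W N V \<psi>)"
  show "truth W N V \<phi> \<subseteq> truth W N V \<psi>"
  proof
    fix w assume "w \<in> truth W N V \<phi>"
    then have "w \<in> W" "cls W N V \<Sigma> w \<in> tl_set W N V \<Sigma> (truth W N V \<psi>)"
      using truth_subset[OF assms(1)] sub by (auto simp: tl_set_def)
    then show "w \<in> truth W N V \<psi>"
      using cls_mem_tl_set_truth_iff[OF assms(1,3)] by blast
  qed
qed (auto simp: tl_set_def)

lemma tl_set_truth_eq_iff:
  assumes "nbhd_model W N V" "\<phi> \<in> \<Sigma>" "\<psi> \<in> \<Sigma>"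
  shows "tl_set W N V \<Sigma> (truth W N V \<phi>) = tl_set W N V \<Sigma> (truth W N V \<psi>)
    \<longleftrightarrow> truth W N V \<phi> = truth W N V \<psi>"
  using tl_set_truth_subset_iff[OF assms] tl_set_truth_subset_iff[OF assms(1,3,2)]
  by blast

lemma box_min_tl_set_truth:
  assumes "nbhd_model W N V" "closed_subf \<Sigma>" "Box \<phi> \<in> \<Sigma>"
  shows "box_min W N V \<Sigma> (tl_set W N V \<Sigma> (truth W N V \<phi>)) = tl_set W N V \<Sigma> (truth W N V (Box \<phi>))"
proof -
  let ?P = "\<lambda>\<psi>. Box \<psi> \<in> \<Sigma> \<and> tl_set W N V \<Sigma> (truth W N V \<phi>) = tl_set W N V \<Sigma> (truth W N V \<psi>)"
  have "?P \<phi>"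
    using assms(3) by blast
  then have "?P (SOME \<psi>. ?P \<psi>)"
    by (rule someI)
  then have "truth W N V \<phi> = truth W N V (SOME \<psi>. ?P \<psi>)"
    using tl_set_truth_eq_iff[OF assms(1)] closed_subf_BoxD[OF assms(2)] assms(3) by blast
  then show ?thesis
    using \<open>?P \<phi>\<close> unfolding box_min_def by auto
qed

lemma box_min_neq_emptyD:
  assumes "box_min W N V \<Sigma> Y \<noteq> {}"
  shows "\<exists>\<chi>. Box \<chi> \<in> \<Sigma> \<and> Y = tl_set W N V \<Sigma> (truth W N V \<chi>)"
  using assms unfolding box_min_def by argo

lemma truth_subset_truth_Box_if_box_min:
  assumes "nbhd_model W N V" "transitive_model W N V" "closed_subf \<Sigma>" "Box \<phi> \<in> \<Sigma>"
    and "tl_set W N V \<Sigma> (truth W N V \<phi>) = box_min W N V \<Sigma> Y"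
    and "tl_set W N V \<Sigma> (truth W N V \<phi>) \<noteq> {}"
  shows "truth W N V \<phi> \<subseteq> truth W N V (Box \<phi>)"
proof -
  obtain \<chi> where \<chi>: "Box \<chi> \<in> \<Sigma>" "Y = tl_set W N V \<Sigma> (truth W N V \<chi>)"
    using box_min_neq_emptyD assms(5,6) by metis
  then have "tl_set W N V \<Sigma> (truth W N V \<phi>) = tl_set W N V \<Sigma> (truth W N V (Box \<chi>))"
    using assms(5) box_min_tl_set_truth[OF assms(1,3)] by simp
  then have \<phi>_eq: "truth W N V \<phi> = N (truth W N V \<chi>)"
    using tl_set_truth_eq_iff[OF assms(1) closed_subf_BoxD[OF assms(3,4)] \<chi>(1)] by simp
  have "N (truth W N V \<chi>) \<subseteq> N (N (truth W N V \<chi>))"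
    using assms(2) truth_subset[OF assms(1)] by (simp add: transitive_model_def)
  then show ?thesis
    by (simp add: \<phi>_eq)
qed

theorem mainTheorem6:
  fixes W :: "'w set" and N :: "'w set \<Rightarrow> 'w set" and V :: "'v \<Rightarrow> 'w set"
    and \<Sigma> :: "'v fm set"
  assumes "nbhd_model W N V"
    and "transitive_model W N V"
    and "closed_subf \<Sigma>"
  shows "\<forall>\<phi>. Box \<phi> \<in> \<Sigma> \<longrightarrow>
           box_T W N V \<Sigma> (tl_set W N V \<Sigma> (truth W N V \<phi>)) = tl_set W N V \<Sigma> (truth W N V (Box \<phi>))"
proof (intro allI impI)
  fix \<phi> assume "Box \<phi> \<in> \<Sigma>"
  let ?X = "tl_set W N V \<Sigma> (truth W N V \<phi>)"
  have "?X \<subseteq> tl_set W N V \<Sigma> (truth W N V (Box \<phi>))" if "?X = box_min W N V \<Sigma> Y" "?X \<noteq> {}" for Y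
    using truth_subset_truth_Box_if_box_min[OF assms \<open>Box \<phi> \<in> \<Sigma>\<close> that] by (auto simp: tl_set_def)
  then have "closure_op (tl_set W N V \<Sigma> W) (box_min W N V \<Sigma>) ?X \<subseteq> tl_set W N V \<Sigma> (truth W N V (Box \<phi>))"
    unfolding closure_op_def by auto
  then show "box_T W N V \<Sigma> ?X = tl_set W N V \<Sigma> (truth W N V (Box \<phi>))"
    unfolding box_T_def box_min_tl_set_truth[OF assms(1,3) \<open>Box \<phi> \<in> \<Sigma>\<close>] by blast
qed

end
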